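(* Let $\mathcal{L}$ be a similarity type containing $0,+,-,\vee,\wedge,\bigvee^-$ (with $\bigvee^-$ of countably infinite arity), let $\mathbb{R}$ be an $\mathcal{L}$-algebra in which these symbols have their usual interpretations and $\bigvee^-(g,f_1,f_2,\dots)=\sup_{n\ge1}\{f_n\wedge g\}$, and let $\mathcal{Z}$ be the variety generated by this $\mathcal{L}$-algebra $\mathbb{R}$. If a quasi-equation with countably many premises $$[\tau_1=\rho_1,\ \tau_2=\rho_2,\ \dots]\Rightarrow\tau=\rho$$ ($\tau,\rho,\tau_n,\rho_n$ being $\mathcal{L}$-terms) holds in $\mathbb{R}$, then it holds in every $G\in\mathcal{Z}$.
   Context: A quasi-equation with countably many premises holds in an $\mathcal{L}$-algebra $A$ if for every assignment of the variables in $A$, whenever all premises $\tau_n=\rho_n$ hold, the conclusion $\tau=\rho$ holds. The variety generated by an algebra is the class of all algebras satisfying every equation (between possibly infinitary terms) true in it, equivalently its closure under products, subalgebras and homomorphic images. *)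

theory Defs
  imports Complex_Main
begin

text \<open>Operation symbols of type 'f; each symbol s has an arity given by the set
  ar s of argument positions, which is either a finite initial segment {..<n}
  or all of nat (countably infinite arity).\<close>

definition sim_type :: "('f \<Rightarrow> nat set) \<Rightarrow> bool" where
  "sim_type ar \<longleftrightarrow> (\<forall>s. ar s = UNIV \<or> (\<exists>n. ar s = {..<n}))"

datatype 'f trm = Var nat | App 'f "nat \<Rightarrow> 'f trm"

primrec eval :: "('f \<Rightarrow> (nat \<Rightarrow> 'a) \<Rightarrow> 'a) \<Rightarrow> (nat \<Rightarrow> 'a) \<Rightarrow> 'f trm \<Rightarrow> 'a" where
  "eval F \<sigma> (Var v) = \<sigma> v"
| "eval F \<sigma> (App s ts) = F s (\<lambda>i. eval F \<sigma> (ts i))"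

definition is_algebra :: "('f \<Rightarrow> nat set) \<Rightarrow> 'a set \<Rightarrow> ('f \<Rightarrow> (nat \<Rightarrow> 'a) \<Rightarrow> 'a) \<Rightarrow> bool" where
  "is_algebra ar C F \<longleftrightarrow>
     (\<forall>s x. (\<forall>i\<in>ar s. x i \<in> C) \<longrightarrow> F s x \<in> C) \<and>
     (\<forall>s x y. (\<forall>i\<in>ar s. x i = y i) \<longrightarrow> F s x = F s y)"

definition holds_eq :: "'a set \<Rightarrow> ('f \<Rightarrow> (nat \<Rightarrow> 'a) \<Rightarrow> 'a) \<Rightarrow> 'f trm \<Rightarrow> 'f trm \<Rightarrow> bool" where
  "holds_eq C F t u \<longleftrightarrow> (\<forall>\<sigma>. range \<sigma> \<subseteq> C \<longrightarrow> eval F \<sigma> t = eval F \<sigma> u)"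

definition holds_qeq :: "'a set \<Rightarrow> ('f \<Rightarrow> (nat \<Rightarrow> 'a) \<Rightarrow> 'a) \<Rightarrow> (nat \<Rightarrow> 'f trm) \<Rightarrow> (nat \<Rightarrow> 'f trm)
     \<Rightarrow> 'f trm \<Rightarrow> 'f trm \<Rightarrow> bool" where
  "holds_qeq C F ts us t u \<longleftrightarrow>
     (\<forall>\<sigma>. range \<sigma> \<subseteq> C \<longrightarrow> (\<forall>n. eval F \<sigma> (ts n) = eval F \<sigma> (us n)) \<longrightarrow> eval F \<sigma> t = eval F \<sigma> u)"

definition variety_gen :: "('f \<Rightarrow> nat set) \<Rightarrow> 'a set \<Rightarrow> ('f \<Rightarrow> (nat \<Rightarrow> 'a) \<Rightarrow> 'a)
     \<Rightarrow> ('b set \<times> ('f \<Rightarrow> (nat \<Rightarrow> 'b) \<Rightarrow> 'b)) set" where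
  "variety_gen ar C0 F0 = {(C, F). is_algebra ar C F \<and>
      (\<forall>t u. holds_eq C0 F0 t u \<longrightarrow> holds_eq C F t u)}"

end

theory Submission
  imports Defs "HOL-Library.Nat_Bijection"
begin

text \<open>Encode the premises as the pairs of variables 2n+2, 2n+3 and the conclusion as the
  variables 0, 1. In the reals there are terms K0, K1 with Kk = xk whenever every pair agrees
  and K0 = K1 otherwise: with g = |x0| \<or> |x1| and s the supremum of all g \<and> q|x(2n+2) - x(2n+3)|,
  clamp xk to the interval [s - g, g - s]; this is xk if s = 0 and 0 if s = g. Substituting
  the terms of the quasi-equation turns it into the equation K0 = K1, while identifying the
  variables of each pair gives the equations Kk = xk. Both kinds of equations pass to every
  algebra of the variety, and there they yield the quasi-equation.\<close>

primrec subst :: "(nat \<Rightarrow> 'f trm) \<Rightarrow> 'f trm \<Rightarrow> 'f trm" where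
  "subst \<theta> (Var v) = \<theta> v"
| "subst \<theta> (App s ts) = App s (\<lambda>i. subst \<theta> (ts i))"

lemma eval_subst: "eval F \<sigma> (subst \<theta> x) = eval F (\<lambda>i. eval F \<sigma> (\<theta> i)) x"
  by (induction x) auto

lemma eval_in_carrier: "is_algebra ar C F \<Longrightarrow> range \<sigma> \<subseteq> C \<Longrightarrow> eval F \<sigma> x \<in> C"
  by (induction x) (auto simp: is_algebra_def)

definition pairs_agree :: "(nat \<Rightarrow> 'a) \<Rightarrow> bool" where
  "pairs_agree v \<longleftrightarrow> (\<forall>n. v (2*n+2) = v (2*n+3))"

definition qeq_subst :: "(nat \<Rightarrow> 'f trm) \<Rightarrow> (nat \<Rightarrow> 'f trm) \<Rightarrow> 'f trm \<Rightarrow> 'f trm \<Rightarrow> nat \<Rightarrow> 'f trm" where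
  "qeq_subst ts us t u i =
     (if i = 0 then t else if i = 1 then u
      else if even i then ts ((i-2) div 2) else us ((i-3) div 2))"

definition identify_pairs :: "nat \<Rightarrow> 'f trm" where
  "identify_pairs i = Var (if odd i \<and> 3 \<le> i then i - 1 else i)"

lemma pairs_agree_qeq_subst:
  "pairs_agree (\<lambda>i. eval F \<sigma> (qeq_subst ts us t u i)) \<longleftrightarrow> (\<forall>n. eval F \<sigma> (ts n) = eval F \<sigma> (us n))"
proof -
  have "qeq_subst ts us t u (2*n+2) = ts n" "qeq_subst ts us t u (2*n+3) = us n" for n
    by (simp_all add: qeq_subst_def)
  then show ?thesis
    by (simp add: pairs_agree_def)
qed

lemma pairs_agree_identify_pairs: "pairs_agree (\<lambda>i. eval F \<sigma> (identify_pairs i))"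
  by (simp add: pairs_agree_def identify_pairs_def)

lemma eval_identify_pairs:
  assumes "pairs_agree w"
  shows "(\<lambda>i. eval F w (identify_pairs i)) = w"
proof
  fix i
  show "eval F w (identify_pairs i) = w i"
  proof (cases "odd i \<and> 3 \<le> i")
    case True
    then have "i = 2 * ((i - 3) div 2) + 3"
      by presburger
    then obtain n where "i = 2*n+3" ..
    then show ?thesis
      using assms by (simp add: pairs_agree_def identify_pairs_def)
  next
    case False
    then show ?thesis
      by (auto simp: identify_pairs_def)
  qed
qed

definition switching :: "'a set \<Rightarrow> ('f \<Rightarrow> (nat \<Rightarrow> 'a) \<Rightarrow> 'a) \<Rightarrow> 'f trm \<Rightarrow> 'f trm \<Rightarrow> bool" where
  "switching C F K\<^sub>0 K\<^sub>1 \<longleftrightarrow>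
     (\<forall>v. range v \<subseteq> C \<longrightarrow>
        (if pairs_agree v then eval F v K\<^sub>0 = v 0 \<and> eval F v K\<^sub>1 = v 1
         else eval F v K\<^sub>0 = eval F v K\<^sub>1))"

lemma holds_eq_identify_pairs:
  fixes C :: "'a set"
  assumes "is_algebra ar C F" "k \<le> 1"
    and "\<And>v. range v \<subseteq> C \<Longrightarrow> pairs_agree v \<Longrightarrow> eval F v K = v k"
  shows "holds_eq C F (subst identify_pairs K) (Var k)"
  unfolding holds_eq_def eval_subst
proof (intro allI impI)
  fix \<sigma> :: "nat \<Rightarrow> 'a" assume "range \<sigma> \<subseteq> C"
  then have "range (\<lambda>i. eval F \<sigma> (identify_pairs i)) \<subseteq> C"
    using eval_in_carrier[OF assms(1)] by blast
  then have "eval F (\<lambda>i. eval F \<sigma> (identify_pairs i)) K = eval F \<sigma> (identify_pairs k)"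
    using assms(3) pairs_agree_identify_pairs by blast
  also have "\<dots> = eval F \<sigma> (Var k)"
    using assms(2) by (auto simp: identify_pairs_def)
  finally show "eval F (\<lambda>i. eval F \<sigma> (identify_pairs i)) K = eval F \<sigma> (Var k)" .
qed

lemma holds_eq_qeq_subst_switching:
  fixes C :: "'a set"
  assumes "is_algebra ar C F" "switching C F K\<^sub>0 K\<^sub>1" "holds_qeq C F ts us t u"
  shows "holds_eq C F (subst (qeq_subst ts us t u) K\<^sub>0) (subst (qeq_subst ts us t u) K\<^sub>1)"
  unfolding holds_eq_def eval_subst
proof (intro allI impI)
  fix \<sigma> :: "nat \<Rightarrow> 'a" assume \<sigma>: "range \<sigma> \<subseteq> C"
  define v where "v = (\<lambda>i. eval F \<sigma> (qeq_subst ts us t u i))"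
  have "range v \<subseteq> C"
    unfolding v_def using eval_in_carrier[OF assms(1) \<sigma>] by blast
  moreover have "pairs_agree v \<Longrightarrow> v 0 = v 1"
    using assms(3) \<sigma> pairs_agree_qeq_subst
    by (fastforce simp: holds_qeq_def v_def qeq_subst_def)
  ultimately show "eval F v K\<^sub>0 = eval F v K\<^sub>1"
    using assms(2) unfolding switching_def by metis
qed

theorem variety_gen_holds_qeq_if_switching:
  fixes C :: "'b set"
  assumes "is_algebra ar C\<^sub>0 F\<^sub>0" "switching C\<^sub>0 F\<^sub>0 K\<^sub>0 K\<^sub>1" "holds_qeq C\<^sub>0 F\<^sub>0 ts us t u"
    and "(C, F) \<in> variety_gen ar C\<^sub>0 F\<^sub>0"
  shows "holds_qeq C F ts us t u"
  unfolding holds_qeq_def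
proof (intro allI impI)
  have alg: "is_algebra ar C F"
    and transfer: "\<And>a b. holds_eq C\<^sub>0 F\<^sub>0 a b \<Longrightarrow> holds_eq C F a b"
    using assms(4) by (auto simp: variety_gen_def)
  have identify_K: "holds_eq C F (subst identify_pairs K\<^sub>0) (Var 0)"
    "holds_eq C F (subst identify_pairs K\<^sub>1) (Var 1)"
    using assms(2) by (auto intro!: transfer holds_eq_identify_pairs[OF assms(1)]
        simp: switching_def)
  fix \<sigma> :: "nat \<Rightarrow> 'b"
  assume \<sigma>: "range \<sigma> \<subseteq> C" and prems_hold: "\<forall>n. eval F \<sigma> (ts n) = eval F \<sigma> (us n)"
  define v where "v = (\<lambda>i. eval F \<sigma> (qeq_subst ts us t u i))"
  have v: "range v \<subseteq> C" "pairs_agree v"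
    unfolding v_def using eval_in_carrier[OF alg \<sigma>] prems_hold pairs_agree_qeq_subst by blast+
  have K_eq: "eval F v K\<^sub>0 = v 0" "eval F v K\<^sub>1 = v 1"
    using identify_K[unfolded holds_eq_def eval_subst, rule_format, OF v(1)]
    unfolding eval_identify_pairs[OF v(2)] by simp_all
  have "eval F v K\<^sub>0 = eval F v K\<^sub>1"
    using transfer[OF holds_eq_qeq_subst_switching[OF assms(1-3)]] \<sigma>
    unfolding holds_eq_def eval_subst v_def by blast
  then show "eval F \<sigma> t = eval F \<sigma> u"
    using K_eq by (simp add: v_def qeq_subst_def)
qed

lemma SUP_min_multiples:
  fixes E :: "nat \<Rightarrow> real" and g :: real
  assumes "g \<ge> 0" "\<And>n. E n \<ge> 0"
  shows "(SUP i\<in>{1::nat..}. min (real (snd (prod_decode (i-1))) * E (fst (prod_decode (i-1)))) g)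
      = (if \<forall>n. E n = 0 then 0 else g)"
proof (cases "\<forall>n. E n = 0")
  case True
  then show ?thesis using assms(1) by simp
next
  case False
  then obtain n where "E n > 0"
    using assms(2) by (metis order_less_le)
  then obtain q :: nat where q: "g < real q * E n"
    using reals_Archimedean3 by blast
  show ?thesis
    unfolding if_not_P[OF False]
  proof (rule cSup_eq_maximum)
    show "g \<in> (\<lambda>i. min (real (snd (prod_decode (i-1))) * E (fst (prod_decode (i-1)))) g) ` {1..}"
      using q by (intro image_eqI[where x="prod_encode (n, q) + 1"]) auto
  qed auto
qed

definition bin_app :: "'f \<Rightarrow> 'f trm \<Rightarrow> 'f trm \<Rightarrow> 'f trm" where
  "bin_app s x y = App s (\<lambda>i. if i = 0 then x else y)"

locale real_vsup_operations =
  fixes RF :: "'f \<Rightarrow> (nat \<Rightarrow> real) \<Rightarrow> real"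
    and zero plus minus join meet vsup :: 'f
  assumes RF_zero: "\<And>x. RF zero x = 0"
    and RF_plus: "\<And>x. RF plus x = x 0 + x 1"
    and RF_minus: "\<And>x. RF minus x = - x 0"
    and RF_join: "\<And>x. RF join x = max (x 0) (x 1)"
    and RF_meet: "\<And>x. RF meet x = min (x 0) (x 1)"
    and RF_vsup: "\<And>x. RF vsup x = (SUP n\<in>{1..}. min (x n) (x 0))"
begin

definition neg_t :: "'f trm \<Rightarrow> 'f trm" where
  "neg_t x = App minus (\<lambda>_. x)"

definition diff_t :: "'f trm \<Rightarrow> 'f trm \<Rightarrow> 'f trm" where
  "diff_t x y = bin_app plus x (neg_t y)"

definition abs_t :: "'f trm \<Rightarrow> 'f trm" where
  "abs_t x = bin_app join x (neg_t x)"

definition clamp_t :: "'f trm \<Rightarrow> 'f trm \<Rightarrow> 'f trm" where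
  "clamp_t x c = bin_app join (bin_app meet x c) (neg_t c)"

primrec nat_mult_t :: "nat \<Rightarrow> 'f trm \<Rightarrow> 'f trm" where
  "nat_mult_t 0 x = App zero (\<lambda>_. x)"
| "nat_mult_t (Suc q) x = bin_app plus x (nat_mult_t q x)"

definition switch_t :: "nat \<Rightarrow> 'f trm" where
  "switch_t k =
    (let g = bin_app join (abs_t (Var 0)) (abs_t (Var 1));
         e = (\<lambda>n. abs_t (diff_t (Var (2*n+2)) (Var (2*n+3))));
         s = App vsup (\<lambda>i. if i = 0 then g else
               nat_mult_t (snd (prod_decode (i-1))) (e (fst (prod_decode (i-1)))))
     in clamp_t (Var k) (diff_t g s))"

lemma eval_diff_t: "eval RF v (diff_t x y) = eval RF v x - eval RF v y"
  by (simp add: diff_t_def neg_t_def bin_app_def RF_plus RF_minus)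

lemma eval_abs_t: "eval RF v (abs_t x) = \<bar>eval RF v x\<bar>"
  by (simp add: abs_t_def neg_t_def bin_app_def RF_join RF_minus)

lemma eval_clamp_t: "eval RF v (clamp_t x c) = max (min (eval RF v x) (eval RF v c)) (- eval RF v c)"
  by (simp add: clamp_t_def neg_t_def bin_app_def RF_join RF_meet RF_minus)

lemma eval_nat_mult_t: "eval RF v (nat_mult_t q x) = real q * eval RF v x"
  by (induction q) (auto simp: bin_app_def RF_zero RF_plus algebra_simps)

lemma eval_switch_t:
  assumes "k \<le> 1"
  shows "eval RF v (switch_t k) = (if pairs_agree v then v k else 0)"
proof -
  define g where "g = max \<bar>v 0\<bar> \<bar>v 1\<bar>"
  define E where "E n = \<bar>v (2*n+2) - v (2*n+3)\<bar>" for n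
  define S where
    "S = (SUP i\<in>{1::nat..}. min (real (snd (prod_decode (i-1))) * E (fst (prod_decode (i-1)))) g)"
  have "eval RF v (switch_t k) = max (min (v k) (g - S)) (- (g - S))"
    by (simp add: switch_t_def Let_def eval_clamp_t eval_diff_t eval_abs_t eval_nat_mult_t
        bin_app_def RF_join RF_vsup g_def E_def S_def del: One_nat_def)
  moreover have "S = (if \<forall>n. E n = 0 then 0 else g)"
    unfolding S_def by (rule SUP_min_multiples) (simp_all add: g_def E_def)
  moreover have "(\<forall>n. E n = 0) \<longleftrightarrow> pairs_agree v"
    by (simp add: E_def pairs_agree_def)
  moreover have "\<bar>v k\<bar> \<le> g"
    using assms unfolding g_def by (cases k) auto
  ultimately show ?thesis
    by auto
qed

lemma switching_switch_t: "switching UNIV RF (switch_t 0) (switch_t 1)"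
  by (simp add: switching_def eval_switch_t)

end

theorem mainTheorem17:
  fixes ar :: "'f \<Rightarrow> nat set"
    and RF :: "'f \<Rightarrow> (nat \<Rightarrow> real) \<Rightarrow> real"
    and zero plus minus join meet vsup :: 'f
    and G :: "'b set" and GF :: "'f \<Rightarrow> (nat \<Rightarrow> 'b) \<Rightarrow> 'b"
    and ts us :: "nat \<Rightarrow> 'f trm" and t u :: "'f trm"
  assumes "sim_type ar"
    and "distinct [zero, plus, minus, join, meet, vsup]"
    and "ar zero = {}" and "ar plus = {..<2}" and "ar minus = {..<1}"
    and "ar join = {..<2}" and "ar meet = {..<2}" and "ar vsup = UNIV"
    and "is_algebra ar UNIV RF"
    and "\<And>x. RF zero x = 0"
    and "\<And>x. RF plus x = x 0 + x 1"
    and "\<And>x. RF minus x = - x 0"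
    and "\<And>x. RF join x = max (x 0) (x 1)"
    and "\<And>x. RF meet x = min (x 0) (x 1)"
    and "\<And>x. RF vsup x = (SUP n\<in>{1..}. min (x n) (x 0))"
    and "holds_qeq UNIV RF ts us t u"
    and "(G, GF) \<in> variety_gen ar UNIV RF"
  shows "holds_qeq G GF ts us t u"
proof -
  interpret real_vsup_operations RF zero plus minus join meet vsup
    using assms(10-15) by unfold_locales
  show ?thesis
    using variety_gen_holds_qeq_if_switching[OF assms(9) switching_switch_t assms(16,17)] .
qed

end
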